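(* Let $k\ge 0$ and $n\ge 1$ be integers, and let $x=(x_1,x_2)$ and $y=(y_1,y_2)$ be distinct points of $\mathbb{Z}^2$ with $|x_1-y_1|<n-2k$ and $|x_2-y_2|<n-2k$. Then \[\pi_n\big(B_{\mathbb{Z}^2}[x,k]\cap B_{\mathbb{Z}^2}[y,k]\big)=\pi_n\big(B_{\mathbb{Z}^2}[x,k]\big)\cap\pi_n\big(B_{\mathbb{Z}^2}[y,k]\big).\]
   Context: $\mathbb{Z}^2$ carries the $l^1$ metric $d((a,b),(a',b'))=|a-a'|+|b-b'|$, and $B_{\mathbb{Z}^2}[x,k]=\{z\in\mathbb{Z}^2: d(x,z)\le k\}$. $\pi_n:\mathbb{Z}^2\to\mathbb{Z}^2/(n\mathbb{Z}\times n\mathbb{Z})$ is the quotient map reducing both coordinates mod $n$. *)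

theory Defs
  imports Main
begin

definition l1dist :: "int \<times> int \<Rightarrow> int \<times> int \<Rightarrow> int" where
  "l1dist p q = \<bar>fst p - fst q\<bar> + \<bar>snd p - snd q\<bar>"

definition ballZ2 :: "int \<times> int \<Rightarrow> int \<Rightarrow> (int \<times> int) set" where
  "ballZ2 x k = {z. l1dist x z \<le> k}"

text \<open>Quotient map Z^2 \<rightarrow> Z^2/(nZ \<times> nZ); a class is represented by the pair of
  canonical residues in {0..n-1}.\<close>
definition pi_n :: "int \<Rightarrow> int \<times> int \<Rightarrow> int \<times> int" where
  "pi_n n p = (fst p mod n, snd p mod n)"

end

theory Submission
  imports Defs
begin

text \<open>Any two points of \<open>B[x,k] \<union> B[y,k]\<close> differ in the \<open>i\<close>-th coordinate by at most
  \<open>2k + |x\<^sub>i - y\<^sub>i| < n\<close>, so \<open>\<pi>\<^sub>n\<close> is injective on that union, and an injective map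
  commutes with intersections. Only the two coordinate hypotheses are needed.\<close>

lemma mod_eq_imp_eq_if_abs_diff_less:
  fixes a b n :: int
  assumes "a mod n = b mod n" and "\<bar>a - b\<bar> < n"
  shows "a = b"
  using assms dvd_imp_le_int[of "a - b" n] by (auto simp: mod_eq_dvd_iff)

lemma inj_on_pi_n:
  assumes "\<And>p q. p \<in> S \<Longrightarrow> q \<in> S \<Longrightarrow> \<bar>fst p - fst q\<bar> < n \<and> \<bar>snd p - snd q\<bar> < n"
  shows "inj_on (pi_n n) S"
  using assms mod_eq_imp_eq_if_abs_diff_less
  unfolding inj_on_def pi_n_def by (metis prod.expand prod.inject)

lemma ballZ2_coordinate_bounds:
  assumes "z \<in> ballZ2 x k"
  shows "\<bar>fst z - fst x\<bar> \<le> k" and "\<bar>snd z - snd x\<bar> \<le> k"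
  using assms by (auto simp: ballZ2_def l1dist_def)

lemma ballZ2_coordinate_dist:
  assumes "p \<in> ballZ2 c k" and "q \<in> ballZ2 d k"
  shows "\<bar>fst p - fst q\<bar> \<le> \<bar>fst c - fst d\<bar> + 2 * k"
    and "\<bar>snd p - snd q\<bar> \<le> \<bar>snd c - snd d\<bar> + 2 * k"
  using ballZ2_coordinate_bounds[OF assms(1)] ballZ2_coordinate_bounds[OF assms(2)]
  by (simp_all add: abs_le_iff) linarith+

lemma ballZ2_union_coordinate_dist:
  assumes "p \<in> ballZ2 x k \<union> ballZ2 y k" and "q \<in> ballZ2 x k \<union> ballZ2 y k"
  shows "\<bar>fst p - fst q\<bar> \<le> \<bar>fst x - fst y\<bar> + 2 * k"
    and "\<bar>snd p - snd q\<bar> \<le> \<bar>snd x - snd y\<bar> + 2 * k"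
  using assms ballZ2_coordinate_dist[of p x k q y] ballZ2_coordinate_dist[of p y k q x]
    ballZ2_coordinate_dist[of p x k q x] ballZ2_coordinate_dist[of p y k q y]
  by (auto simp: abs_minus_commute)

lemma inj_on_pi_n_ballZ2_union:
  assumes "\<bar>fst x - fst y\<bar> < n - 2 * k" and "\<bar>snd x - snd y\<bar> < n - 2 * k"
  shows "inj_on (pi_n n) (ballZ2 x k \<union> ballZ2 y k)"
  using assms ballZ2_union_coordinate_dist by (intro inj_on_pi_n) (smt (verit))

theorem lemma5p4:
  fixes k n :: int and x y :: "int \<times> int"
  assumes "k \<ge> 0" and "n \<ge> 1" and "x \<noteq> y"
    and "\<bar>fst x - fst y\<bar> < n - 2 * k"
    and "\<bar>snd x - snd y\<bar> < n - 2 * k"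
  shows "pi_n n ` (ballZ2 x k \<inter> ballZ2 y k) = pi_n n ` ballZ2 x k \<inter> pi_n n ` ballZ2 y k"
  using inj_on_pi_n_ballZ2_union[OF assms(4,5)] by (rule inj_on_image_Int) auto

end
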